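(* Let $B \ge 2$ be an integer base, let $f, g$ be nonnegative integers with base-$B$ digits $f_i, g_j$ (so $f = \sum_i f_i B^i$, $g = \sum_j g_j B^j$, $0 \le f_i, g_j < B$, digits with index outside $[0..\mathrm{prec}_B f)$ resp. $[0..\mathrm{prec}_B g)$ being $0$), and let $0 \le a \le b$ be integers. Set $G = \min(a, \lceil \log_B \mathrm{prec}_B g \rceil + 1)$. Compute by classical column summation starting at column $a-G$: set $c'_{a-G} = 0$ and for $k = a-G, \dots, b$ let $s'_k = c'_k + \sum_{i=0}^{k} f_i g_{k-i}$, $d_k = s'_k \bmod B$, $c'_{k+1} = \lfloor s'_k / B \rfloor$. Then the value $D = \sum_{k=a}^{b} d_k B^k$ equals the clipped product $\mathrm{clip}_{B,[a..b]}(fg)$ to within one unit in position $a$ (i.e., to within $B^a$); that is, computing the $[a..b]$ clipped product to within one unit in position $a$ by classical multiplication requires summing only columns $a-G, \dots, b$, with the columns $a-G,\dots,a-1$ used only to determine the carry into column $a$ (at most $G$ guard digits).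
   Context: For a positive integer $n$, $\mathrm{prec}_B n = \lfloor \log_B |n| \rfloor + 1$ is the number of base-$B$ digits of $n$. For an integer $u = \sum_i u_{i} B^i$ with base-$B$ digits $u_i$ and an integer interval $[a..b] = \{i \in \mathbb{Z} : a \le i \le b\}$, the clipped value is $\mathrm{clip}_{B,[a..b]}\, u = \sum_{i=a}^{b} u_i B^i$. Classical multiplication forms $fg$ by summing, column by column from low to high, the digit products $f_i g_j$ with $i+j=k$ in column $k$ together with the carry from column $k-1$. *)

theory Defs
  imports "HOL-Number_Theory.Cong" Complex_Main
begin

definition digit :: "nat \<Rightarrow> nat \<Rightarrow> nat \<Rightarrow> nat" where
  "digit B n i = (n div B ^ i) mod B"

definition prec :: "nat \<Rightarrow> nat \<Rightarrow> nat" where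
  "prec B n = (if n = 0 then 0 else nat \<lfloor>log (real B) (real n)\<rfloor> + 1)"

definition clip :: "nat \<Rightarrow> nat \<Rightarrow> nat \<Rightarrow> nat \<Rightarrow> nat" where
  "clip B a b u = (\<Sum>i=a..b. digit B u i * B ^ i)"

definition colsum :: "nat \<Rightarrow> nat \<Rightarrow> nat \<Rightarrow> nat \<Rightarrow> nat" where
  "colsum B f g k = (\<Sum>i=0..k. digit B f i * digit B g (k - i))"

text \<open>carry B f g s n = c'_{s+n}, the carry into column s+n when summation starts at
  column s with c'_s = 0 and c'_{k+1} = floor((c'_k + colsum k) / B).\<close>
primrec carry :: "nat \<Rightarrow> nat \<Rightarrow> nat \<Rightarrow> nat \<Rightarrow> nat \<Rightarrow> nat" where
  "carry B f g s 0 = 0"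
| "carry B f g s (Suc n) = (carry B f g s n + colsum B f g (s + n)) div B"

definition guard :: "nat \<Rightarrow> nat \<Rightarrow> nat \<Rightarrow> nat" where
  "guard B g a = min a (nat \<lceil>log (real B) (real (prec B g))\<rceil> + 1)"

definition outdigit :: "nat \<Rightarrow> nat \<Rightarrow> nat \<Rightarrow> nat \<Rightarrow> nat \<Rightarrow> nat" where
  "outdigit B f g s k = (carry B f g s (k - s) + colsum B f g k) mod B"

definition truncD :: "nat \<Rightarrow> nat \<Rightarrow> nat \<Rightarrow> nat \<Rightarrow> nat \<Rightarrow> nat" where
  "truncD B f g a b = (\<Sum>k=a..b. outdigit B f g (a - guard B g a) k * B ^ k)"

end

theory Submission
  imports Defs
begin

text \<open>
  Start the summation at column \<open>s = a - G\<close> and let \<open>R\<close> be the value of the columns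
  \<open>s, ..., b\<close> read in base \<open>B\<close> with their unnormalised column sums as digits. The carry into
  column \<open>s + m\<close> is the integer part of the value of the first \<open>m\<close> columns divided by \<open>B^m\<close>,
  so classical summation produces exactly the base-\<open>B\<close> digits of \<open>R\<close>, and \<open>D\<close> is \<open>B^s\<close> times
  the digits \<open>G, ..., b - s\<close> of \<open>R\<close>. Modulo \<open>B^(b+1)\<close> the product \<open>fg\<close> agrees with the value of
  all columns \<open>0, ..., b\<close>, which is \<open>B^s R\<close> plus the skipped columns below \<open>s\<close>. Each column sum is
  at most \<open>prec_B g (B - 1)^2\<close>, so by the choice of \<open>G\<close> the skipped columns are worth less than
  \<open>B^(s+G) = B^a\<close>; together with the guard digits of \<open>R\<close> they stay below \<open>2 B^a\<close> and can
  therefore propagate at most one unit into position \<open>a\<close>.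
\<close>

lemma mod_power_Suc_eq: "x mod B ^ Suc n = x mod B ^ n + digit B x n * B ^ n"
  unfolding power_Suc2 digit_def mod_mult2_eq by (simp only: ac_simps)

lemma mod_power_eq_sum_digits: "x mod B ^ n = (\<Sum>i<n. digit B x i * B ^ i)"
  by (induction n) (simp_all add: mod_power_Suc_eq del: power_Suc)

lemma clip_add_mod_power:
  assumes "a \<le> Suc b"
  shows "clip B a b u + u mod B ^ a = u mod B ^ Suc b"
proof -
  let ?d = "\<lambda>i. digit B u i * B ^ i"
  have "sum ?d {0..<a} + sum ?d {a..<Suc b} = sum ?d {0..<Suc b}"
    using assms by (intro sum.atLeastLessThan_concat) auto
  then show ?thesis
    unfolding clip_def mod_power_eq_sum_digits atLeastLessThanSuc_atLeastAtMost atLeast0LessThan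
    by (metis add.commute atLeast0AtMost lessThan_Suc_atMost)
qed

lemma digit_add_mult_power: "digit B (x + B ^ Suc i * y) i = digit B x i"
proof (cases "B = 0")
  case False
  have "(x + B * y * B ^ i) div B ^ i = x div B ^ i + B * y"
    using False by simp
  then show ?thesis
    unfolding digit_def by (simp add: power_Suc2 ac_simps)
qed simp

lemma digit_le: "0 < B \<Longrightarrow> digit B n i \<le> B - 1"
  unfolding digit_def using less_Suc_eq_le by fastforce

lemma less_power_prec:
  assumes "1 < B"
  shows "n < B ^ prec B n"
proof (cases "n = 0")
  case False
  have "real n = real B powr log (real B) (real n)"
    using False assms by simp
  also have "\<dots> < real B powr (real (nat \<lfloor>log (real B) (real n)\<rfloor> + 1))"
    using False assms by (intro powr_less_mono) linarith+
  also have "\<dots> = real (B ^ prec B n)"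
    using False assms by (subst powr_realpow) (auto simp: prec_def)
  finally show ?thesis
    by linarith
qed (simp add: prec_def)

lemma digit_eq_0_if_prec_le:
  assumes "1 < B" "prec B n \<le> i"
  shows "digit B n i = 0"
proof -
  have "n < B ^ i"
    using less_power_prec[OF assms(1)] power_increasing[OF assms(2), of B] assms(1)
    by (meson less_le_trans less_imp_le)
  then show ?thesis
    by (simp add: digit_def)
qed

lemma le_power_ceiling_log:
  assumes "1 < B"
  shows "n \<le> B ^ nat \<lceil>log (real B) (real n)\<rceil>"
proof (cases "n = 0")
  case False
  have "real n = real B powr log (real B) (real n)"
    using False assms by simp
  also have "\<dots> \<le> real B powr (real (nat \<lceil>log (real B) (real n)\<rceil>))"
    using False assms by (intro powr_mono) linarith+
  also have "\<dots> = real (B ^ nat \<lceil>log (real B) (real n)\<rceil>)"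
    using assms by (simp add: powr_realpow)
  finally show ?thesis
    by linarith
qed simp

lemma colsum_le:
  assumes "1 < B"
  shows "colsum B f g k \<le> prec B g * (B - 1) * (B - 1)"
proof -
  let ?I = "{i \<in> {0..k}. k - i < prec B g}"
  have term_le: "digit B f i * digit B g (k - i) \<le> (B - 1) * (B - 1)" for i
    using assms by (intro mult_le_mono digit_le) simp_all
  have "colsum B f g k = (\<Sum>i\<in>?I. digit B f i * digit B g (k - i))"
    unfolding colsum_def
    by (rule sum.mono_neutral_right) (auto simp: digit_eq_0_if_prec_le[OF assms] not_less)
  also have "\<dots> \<le> card ?I * ((B - 1) * (B - 1))"
    using sum_bounded_above[of ?I "\<lambda>i. digit B f i * digit B g (k - i)", OF term_le] by simp
  also have "card ?I \<le> card {..<prec B g}"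
    by (rule card_inj_on_le[where f = "\<lambda>i. k - i"]) (auto simp: inj_on_def)
  finally show ?thesis
    by (simp add: mult.assoc)
qed

lemma sum_mult_power_le:
  fixes B c s :: nat and h :: "nat \<Rightarrow> nat"
  assumes "0 < B" "\<And>k. k < s \<Longrightarrow> h k \<le> c * (B - 1)"
  shows "(\<Sum>k<s. h k * B ^ k) \<le> c * (B ^ s - 1)"
  using assms(2)
proof (induction s)
  case (Suc s)
  have "h s * B ^ s \<le> c * (B - 1) * B ^ s"
    using Suc.prems[of s] by (simp add: mult_le_mono1)
  then have "(\<Sum>k<Suc s. h k * B ^ k) \<le> c * (B ^ s - 1) + c * (B - 1) * B ^ s"
    using Suc by (simp add: add_mono)
  also have "\<dots> = c * (B ^ Suc s - 1)"
    using assms(1) by (simp add: algebra_simps diff_mult_distrib2)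
  finally show ?case .
qed simp

definition column_value :: "nat \<Rightarrow> nat \<Rightarrow> nat \<Rightarrow> nat \<Rightarrow> nat \<Rightarrow> nat" where
  "column_value B f g s n = (\<Sum>t<n. colsum B f g (s + t) * B ^ t)"

lemma column_value_Suc:
  "column_value B f g s (Suc n) = column_value B f g s n + colsum B f g (s + n) * B ^ n"
  by (simp add: column_value_def)

lemma column_value_add:
  "column_value B f g s (m + n) = column_value B f g s m + B ^ m * column_value B f g (s + m) n"
  by (induction n) (simp_all add: column_value_Suc column_value_def power_add algebra_simps)

lemma column_value_eq_sum_partial_products:
  "column_value B f g 0 n = (\<Sum>i<n. digit B f i * B ^ i * (g mod B ^ (n - i)))"
proof (induction n)
  case (Suc n)
  have "digit B f i * B ^ i * (g mod B ^ (Suc n - i))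
      = digit B f i * B ^ i * (g mod B ^ (n - i)) + digit B f i * digit B g (n - i) * B ^ n"
    if "i \<in> {..<Suc n}" for i
  proof -
    have "Suc n - i = Suc (n - i)" "B ^ n = B ^ i * B ^ (n - i)"
      using that by (simp_all flip: power_add)
    then show ?thesis
      by (simp add: mod_power_Suc_eq algebra_simps del: power_Suc)
  qed
  then have "(\<Sum>i<Suc n. digit B f i * B ^ i * (g mod B ^ (Suc n - i)))
      = (\<Sum>i<Suc n. digit B f i * B ^ i * (g mod B ^ (n - i)) + digit B f i * digit B g (n - i) * B ^ n)"
    by (rule sum.cong[OF refl])
  also have "\<dots> = (\<Sum>i<n. digit B f i * B ^ i * (g mod B ^ (n - i))) + colsum B f g n * B ^ n"
    by (simp add: sum.distrib colsum_def atLeast0AtMost sum_distrib_right add_mult_distrib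
        flip: lessThan_Suc_atMost)
  finally show ?case
    using Suc by (simp add: column_value_Suc)
qed (simp add: column_value_def)

lemma mult_mod_power_eq_column_value:
  assumes "m \<le> n"
  shows "(f * g) mod B ^ m = column_value B f g 0 n mod B ^ m"
proof -
  have "[digit B f i * B ^ i * (g mod B ^ (n - i)) = digit B f i * B ^ i * g] (mod B ^ n)"
    if "i \<in> {..<n}" for i
  proof -
    have "B ^ n = B ^ i * B ^ (n - i)"
      using that by (simp flip: power_add)
    then have "B ^ i * (g mod B ^ (n - i)) = B ^ i * g mod B ^ n"
      by (simp add: mod_mult_mult1)
    then show ?thesis
      unfolding cong_def by (metis mod_mult_right_eq mult.assoc)
  qed
  then have "[column_value B f g 0 n = (\<Sum>i<n. digit B f i * B ^ i) * g] (mod B ^ n)"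
    unfolding column_value_eq_sum_partial_products sum_distrib_right by (rule cong_sum)
  also have "[(\<Sum>i<n. digit B f i * B ^ i) * g = f * g] (mod B ^ n)"
    unfolding cong_def mod_power_eq_sum_digits[symmetric] by (simp add: mod_mult_left_eq)
  finally have "[f * g = column_value B f g 0 n] (mod B ^ n)"
    by (rule cong_sym)
  then show ?thesis
    using assms by (metis cong_def cong_dvd_modulus_nat le_imp_power_dvd)
qed

lemma carry_eq_column_value:
  assumes "0 < B"
  shows "carry B f g s n = column_value B f g s n div B ^ n"
proof (induction n)
  case (Suc n)
  have "carry B f g s (Suc n) = (column_value B f g s n div B ^ n + colsum B f g (s + n)) div B"
    using Suc by simp
  also have "\<dots> = column_value B f g s (Suc n) div B ^ n div B"
    using assms by (simp add: column_value_Suc ac_simps)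
  finally show ?case
    by (simp only: power_Suc2 div_mult2_eq)
qed (simp add: column_value_def)

lemma outdigit_eq_digit_column_value:
  assumes "0 < B" "s \<le> k" "k < s + n"
  shows "outdigit B f g s k = digit B (column_value B f g s n) (k - s)"
proof -
  define m where "m = k - s"
  have k: "k = s + m" and n: "n = Suc m + (n - Suc m)"
    using assms by (simp_all add: m_def)
  have "outdigit B f g s k = (column_value B f g s m div B ^ m + colsum B f g (s + m)) mod B"
    unfolding outdigit_def carry_eq_column_value[OF assms(1)] k by simp
  also have "\<dots> = digit B (column_value B f g s (Suc m)) m"
    using assms(1) by (simp add: digit_def column_value_Suc ac_simps)
  also have "\<dots> = digit B (column_value B f g s n) m"
    by (subst n, simp only: column_value_add digit_add_mult_power)
  finally show ?thesis
    by (simp add: m_def)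
qed

lemma sum_outdigits_eq_clip_column_value:
  assumes "0 < B" "s \<le> a" "a \<le> b"
  shows "(\<Sum>k=a..b. outdigit B f g s k * B ^ k)
    = B ^ s * clip B (a - s) (b - s) (column_value B f g s (Suc b - s))"
proof -
  have "(\<Sum>k=a..b. outdigit B f g s k * B ^ k)
      = (\<Sum>j=a-s..b-s. outdigit B f g s (j + s) * B ^ (j + s))"
    using sum.shift_bounds_cl_nat_ivl[of _ "a - s" s "b - s"] assms by simp
  also have "\<dots> = (\<Sum>j=a-s..b-s. B ^ s * (digit B (column_value B f g s (Suc b - s)) j * B ^ j))"
  proof (intro sum.cong refl)
    fix j
    assume "j \<in> {a - s..b - s}"
    then have "outdigit B f g s (j + s) = digit B (column_value B f g s (Suc b - s)) j"
      using assms by (subst outdigit_eq_digit_column_value) auto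
    then show "outdigit B f g s (j + s) * B ^ (j + s)
        = B ^ s * (digit B (column_value B f g s (Suc b - s)) j * B ^ j)"
      by (simp add: power_add)
  qed
  finally show ?thesis
    by (simp add: clip_def sum_distrib_left)
qed

lemma sum_outdigits_add_guard_digits:
  fixes B f g s a b :: nat
  assumes "0 < B" "s \<le> a" "a \<le> b"
  defines "R \<equiv> column_value B f g s (Suc b - s)"
  shows "(\<Sum>k=a..b. outdigit B f g s k * B ^ k) + B ^ s * (R mod B ^ (a - s)) = B ^ s * R mod B ^ Suc b"
proof -
  have "(\<Sum>k=a..b. outdigit B f g s k * B ^ k) + B ^ s * (R mod B ^ (a - s))
      = B ^ s * (clip B (a - s) (b - s) R + R mod B ^ (a - s))"
    using assms by (simp add: sum_outdigits_eq_clip_column_value distrib_left)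
  also have "\<dots> = B ^ s * (R mod B ^ Suc (b - s))"
    using clip_add_mod_power[of "a - s" "b - s" B R] assms by simp
  also have "\<dots> = B ^ s * R mod (B ^ s * B ^ Suc (b - s))"
    by (rule mod_mult_mult1[symmetric])
  also have "B ^ s * B ^ Suc (b - s) = B ^ Suc b"
    using assms by (simp flip: power_add)
  finally show ?thesis .
qed

lemma column_value_less_power_add:
  assumes "1 < B" "prec B g * B \<le> B ^ G"
  shows "column_value B f g 0 s < B ^ (s + G)"
proof -
  have "column_value B f g 0 s \<le> prec B g * (B - 1) * (B ^ s - 1)"
    unfolding column_value_def using assms(1) by (intro sum_mult_power_le colsum_le) simp_all
  also have "\<dots> \<le> prec B g * (B - 1) * B ^ s"
    by simp
  also have "\<dots> < B ^ G * B ^ s"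
  proof -
    have "prec B g * (B - 1) < B ^ G"
      using assms by (cases "prec B g = 0") (simp_all add: less_le_trans[OF _ assms(2)])
    then show ?thesis
      using assms(1) by simp
  qed
  finally show ?thesis
    by (simp add: power_add mult.commute)
qed

lemma column_value_guard_less:
  assumes "1 < B"
  shows "column_value B f g 0 (a - guard B g a) < B ^ a"
proof (cases "guard B g a = a")
  case True
  then show ?thesis
    using assms by (simp add: column_value_def)
next
  case False
  then have "guard B g a = nat \<lceil>log (real B) (real (prec B g))\<rceil> + 1"
    by (simp add: guard_def min_def split: if_splits)
  then have "prec B g * B \<le> B ^ guard B g a"
    using le_power_ceiling_log[OF assms, of "prec B g"] by simp
  moreover have "guard B g a \<le> a"
    by (simp add: guard_def)
  ultimately show ?thesis
    using column_value_less_power_add[OF assms, of g "guard B g a" f "a - guard B g a"] by simp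
qed

lemma sum_outdigits_within_one_unit:
  assumes "0 < B" "s \<le> a" "a \<le> b" "column_value B f g 0 s < B ^ a"
  shows "\<exists>e\<le>1. [(\<Sum>k=a..b. outdigit B f g s k * B ^ k) + e * B ^ a = clip B a b (f * g)]
    (mod B ^ Suc b)"
proof -
  define D where "D = (\<Sum>k=a..b. outdigit B f g s k * B ^ k)"
  define R where "R = column_value B f g s (Suc b - s)"
  \<comment> \<open>the columns below \<open>a\<close> as seen by the truncated computation: the skipped ones and the
    guard columns\<close>
  define L where "L = column_value B f g 0 s + B ^ s * (R mod B ^ (a - s))"
  have Ba: "B ^ a = B ^ s * B ^ (a - s)"
    using assms by (simp flip: power_add)
  have S: "column_value B f g 0 (Suc b) = column_value B f g 0 s + B ^ s * R"
    using column_value_add[of B f g 0 s "Suc b - s"] assms by (simp add: R_def)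
  have DX: "D + B ^ s * (R mod B ^ (a - s)) = B ^ s * R mod B ^ Suc b"
    unfolding D_def R_def using assms(1-3) by (rule sum_outdigits_add_guard_digits)
  have "(D + L) mod B ^ Suc b = (B ^ s * R mod B ^ Suc b + column_value B f g 0 s) mod B ^ Suc b"
    unfolding L_def DX[symmetric] by (simp only: ac_simps)
  then have "[D + L = column_value B f g 0 (Suc b)] (mod B ^ Suc b)"
    unfolding S cong_def by (simp only: mod_add_left_eq mod_add_right_eq add.commute)
  also have "[column_value B f g 0 (Suc b) = f * g] (mod B ^ Suc b)"
    unfolding cong_def by (rule mult_mod_power_eq_column_value[symmetric]) simp
  also have "[f * g = clip B a b (f * g) + (f * g) mod B ^ a] (mod B ^ Suc b)"
    using clip_add_mod_power[of a b B "f * g"] assms unfolding cong_def by simp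
  finally have D: "[D + L = clip B a b (f * g) + (f * g) mod B ^ a] (mod B ^ Suc b)" .
  have "B ^ s * R = B ^ s * (R mod B ^ (a - s) + B ^ (a - s) * (R div B ^ (a - s)))"
    by simp
  then have "column_value B f g 0 (Suc b) = L + B ^ a * (R div B ^ (a - s))"
    unfolding S L_def Ba by (simp only: distrib_left add.assoc mult.assoc)
  then have L_mod: "L mod B ^ a = (f * g) mod B ^ a"
    using mult_mod_power_eq_column_value[of a "Suc b" f g B] assms by simp
  have "B ^ s * (R mod B ^ (a - s)) < B ^ a"
    unfolding Ba using assms(1) by simp
  then have "L div B ^ a \<le> 1"
    using assms(4) less_mult_imp_div_less[of L 2 "B ^ a"] unfolding L_def by linarith
  moreover have "[D + L div B ^ a * B ^ a + L mod B ^ a = clip B a b (f * g) + L mod B ^ a]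
      (mod B ^ Suc b)"
    using D by (simp only: L_mod[symmetric] add.assoc div_mult_mod_eq)
  then have "[D + L div B ^ a * B ^ a = clip B a b (f * g)] (mod B ^ Suc b)"
    by (simp only: cong_add_rcancel_nat)
  ultimately show ?thesis
    unfolding D_def by blast
qed

theorem theorem2:
  fixes B f g a b :: nat
  assumes "B \<ge> 2" and "a \<le> b"
  shows "\<exists>e::int. \<bar>e\<bar> \<le> 1 \<and>
    [int (truncD B f g a b) = int (clip B a b (f * g)) + e * int B ^ a] (mod (int B ^ (b + 1)))"
proof -
  have "0 < B" "1 < B"
    using assms(1) by simp_all
  then obtain e :: nat where "e \<le> 1"
    and "[truncD B f g a b + e * B ^ a = clip B a b (f * g)] (mod B ^ Suc b)"
    using sum_outdigits_within_one_unit[of B "a - guard B g a" a b f g] column_value_guard_less assms(2)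
    unfolding truncD_def by auto
  then have "[int (truncD B f g a b) + int e * int B ^ a = int (clip B a b (f * g))] (mod int B ^ (b + 1))"
    using cong_int_iff[of "truncD B f g a b + e * B ^ a" "clip B a b (f * g)" "B ^ Suc b"] by simp
  then have "[int (truncD B f g a b) = int (clip B a b (f * g)) - int e * int B ^ a] (mod int B ^ (b + 1))"
    using cong_diff[OF _ cong_refl[of "int e * int B ^ a"]] by fastforce
  with \<open>e \<le> 1\<close> show ?thesis
    by (intro exI[of _ "- int e"]) simp
qed

end
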